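(* Let $A$ be a three-dimensional permutation array of size $n_1\times n_2\times n_1n_2$ (defined by a bijection $\varphi:[n_1]\times[n_2]\to[n_1n_2]$, with $n_1,n_2\ge2$). If any of the following holds: (i) $n_1$ and $n_2$ are both odd; (ii) $n_1$ and $n_2$ are both even and $\max(n_1,n_2)>4$; (iii) one of $n_1,n_2$ is even and greater than $2$ and the other is odd; then there is an $n_1\times n_2\times n_1n_2$ window in the periodic extension of $A$ having a repeated difference vector.
   Context: For $n\in\mathbb{N}$, $[n]=\{1,\dots,n\}$. The array $A:[n_1]\times[n_2]\times[n_1n_2]\to\{0,1\}$ is defined by $A(a_1,a_2,a_3)=1$ iff $\varphi(a_1,a_2)=a_3$; points with value 1 are dots. The periodic extension $\mathbb{A}:\mathbb{Z}^3\to\{0,1\}$ is $\mathbb{A}(a_1,a_2,a_3)=A(a_1',a_2',a_3')$ where $a_i'$ is the representative of $a_i$ modulo the $i$-th side length lying in $\{1,\dots,\text{side length}\}$; an $n_1\times n_2\times n_1n_2$ window is the restriction of $\mathbb{A}$ to a box $\{k_1,\dots,k_1+n_1-1\}\times\{k_2,\dots,k_2+n_2-1\}\times\{k_3,\dots,k_3+n_1n_2-1\}$. The difference vector from dot $(a_i)$ to a distinct dot $(w_i)$ is $\langle w_1-a_1,w_2-a_2,w_3-a_3\rangle$; a window has a repeated difference vector if two distinct ordered pairs of distinct dots in it have equal difference vectors. *)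

theory Defs
  imports Main
begin

type_synonym point3 = "int \<times> int \<times> int"

text \<open>The permutation array A : [n1] x [n2] x [n1 n2] -> {0,1} defined by phi;
  True means a dot (value 1).\<close>
definition perm_array :: "(nat \<Rightarrow> nat \<Rightarrow> nat) \<Rightarrow> nat \<Rightarrow> nat \<Rightarrow> nat \<Rightarrow> nat \<Rightarrow> nat \<Rightarrow> bool" where
  "perm_array \<phi> n1 n2 a1 a2 a3 \<longleftrightarrow>
     a1 \<in> {1..n1} \<and> a2 \<in> {1..n2} \<and> a3 \<in> {1..n1*n2} \<and> \<phi> a1 a2 = a3"

definition rep :: "int \<Rightarrow> nat \<Rightarrow> int" where
  "rep a n = (a - 1) mod int n + 1"

definition periodic_ext :: "(nat \<Rightarrow> nat \<Rightarrow> nat) \<Rightarrow> nat \<Rightarrow> nat \<Rightarrow> point3 \<Rightarrow> bool" where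
  "periodic_ext \<phi> n1 n2 p = (case p of (a1, a2, a3) \<Rightarrow>
     perm_array \<phi> n1 n2 (nat (rep a1 n1)) (nat (rep a2 n2)) (nat (rep a3 (n1*n2))))"

definition window_dots :: "(nat \<Rightarrow> nat \<Rightarrow> nat) \<Rightarrow> nat \<Rightarrow> nat \<Rightarrow> int \<Rightarrow> int \<Rightarrow> int \<Rightarrow> point3 set" where
  "window_dots \<phi> n1 n2 k1 k2 k3 =
     {(a1, a2, a3). a1 \<in> {k1..k1 + int n1 - 1} \<and> a2 \<in> {k2..k2 + int n2 - 1}
        \<and> a3 \<in> {k3..k3 + int (n1*n2) - 1} \<and> periodic_ext \<phi> n1 n2 (a1, a2, a3)}"

definition diff_vec :: "point3 \<Rightarrow> point3 \<Rightarrow> point3" where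
  "diff_vec a w = (case a of (a1, a2, a3) \<Rightarrow> case w of (w1, w2, w3) \<Rightarrow>
     (w1 - a1, w2 - a2, w3 - a3))"

definition has_repeated_diff :: "point3 set \<Rightarrow> bool" where
  "has_repeated_diff D \<longleftrightarrow>
     (\<exists>a w b v. a \<in> D \<and> w \<in> D \<and> b \<in> D \<and> v \<in> D \<and> a \<noteq> w \<and> b \<noteq> v
        \<and> (a, w) \<noteq> (b, v) \<and> diff_vec a w = diff_vec b v)"

end

theory Submission
  imports Defs
begin

text \<open>Consider the \<open>N = n\<^sub>1 n\<^sub>2\<close> steps \<open>(i, j) \<rightarrow> (i + 1, j)\<close> along the first
  axis, taken cyclically in \<open>[n\<^sub>1]\<close>. Their gaps \<open>\<phi>(i + 1, j) - \<phi>(i, j)\<close> modulo \<open>N\<close>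
  are nonzero, so by pigeonhole two distinct steps share a gap. If \<open>n\<^sub>1 \<ge> 3\<close>, the window
  in the first axis can be cut at a value left by neither step, so both appear as adjacent
  positions; and the window in the third axis can be placed so that both gaps unwrap to the
  same integer, unless the two steps are reverses of each other, which is impossible because
  for \<open>n\<^sub>1 \<ge> 3\<close> the cyclic successor has no 2-cycles. The case \<open>n\<^sub>2 \<ge> 3\<close> follows
  by transposing the first two axes, and the hypotheses exclude only \<open>n\<^sub>1 = n\<^sub>2 = 2\<close>.\<close>

lemma eq_if_mod_eq_in_interval:
  fixes a b n :: int
  assumes "a \<in> {1..n}" "b \<in> {1..n}" "a mod n = b mod n"
  shows "a = b"
proof (rule ccontr)
  assume "a \<noteq> b"
  have "n dvd a - b" using assms(3) by (simp add: mod_eq_dvd_iff)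
  then have "\<bar>n\<bar> \<le> \<bar>a - b\<bar>" using \<open>a \<noteq> b\<close> by (simp add: dvd_imp_le_int)
  then show False using assms(1,2) by auto
qed

lemma cyclic_gap_collision:
  fixes f :: "'a \<Rightarrow> int" and \<sigma> :: "'a \<Rightarrow> 'a"
  assumes "finite P" "card P = N" "N > 0" "inj_on f P" "f ` P \<subseteq> {1..int N}"
    "\<sigma> ` P \<subseteq> P" "\<And>x. x \<in> P \<Longrightarrow> \<sigma> x \<noteq> x"
  shows "\<exists>x\<in>P. \<exists>y\<in>P. x \<noteq> y \<and> (f (\<sigma> x) - f x) mod int N \<noteq> 0
           \<and> (f (\<sigma> x) - f x) mod int N = (f (\<sigma> y) - f y) mod int N"
proof -
  define gap where "gap x = (f (\<sigma> x) - f x) mod int N" for x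
  have gap_range: "gap x \<in> {1..int N - 1}" if "x \<in> P" for x
  proof -
    have "f (\<sigma> x) \<noteq> f x" using assms(4,6,7) that by (auto dest: inj_onD)
    then have "f (\<sigma> x) mod int N \<noteq> f x mod int N"
      using assms(5,6) that eq_if_mod_eq_in_interval by blast
    then have "gap x \<noteq> 0" unfolding gap_def by (simp add: mod_eq_dvd_iff dvd_eq_mod_eq_0)
    moreover have "0 \<le> gap x" "gap x < int N" using assms(3) unfolding gap_def by auto
    ultimately show ?thesis by auto
  qed
  have "\<not> inj_on gap P"
  proof
    assume "inj_on gap P"
    then have "card (gap ` P) = N" "gap ` P \<subseteq> {1..int N - 1}"
      using assms(2) gap_range by (auto simp: card_image)
    then have "N \<le> card {1..int N - 1}" by (metis card_mono finite_atLeastAtMost_int)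
    then show False using assms(3) by auto
  qed
  then obtain x y where "x \<in> P" "y \<in> P" "x \<noteq> y" "gap x = gap y"
    unfolding inj_on_def by blast
  then show ?thesis using gap_range unfolding gap_def by fastforce
qed

lemma has_repeated_diffI:
  assumes "a \<in> D" "w \<in> D" "b \<in> D" "v \<in> D" "a \<noteq> w" "(a, w) \<noteq> (b, v)"
    and "diff_vec a w = diff_vec b v"
  shows "has_repeated_diff D"
proof -
  have "b \<noteq> v" using assms(5,7) by (auto simp: diff_vec_def split: prod.splits)
  then show ?thesis using assms unfolding has_repeated_diff_def by blast
qed

text \<open>The representative of \<open>a\<close> modulo \<open>N\<close> in \<open>{k..k+N-1}\<close>, i.e. the third
  coordinate of a dot with value \<open>a\<close> in a window starting at height \<open>k\<close>.\<close>
definition window_lift :: "int \<Rightarrow> int \<Rightarrow> int \<Rightarrow> int" where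
  "window_lift N k a = k + (a - k) mod N"

text \<open>The pairs are \<open>(0, c)\<close> and \<open>(d, d + c)\<close> on the cycle \<open>\<int>/N\<close>; the cut \<open>-t\<close>
  must lie on both arcs of length \<open>c\<close> or on neither, which fails only for complementary arcs.\<close>
lemma common_unwrapping_offset_normalized:
  fixes c d N :: int
  assumes "0 < c" "c < N" "0 \<le> d" "d < N" "\<not> (d = c \<and> 2*c = N)"
  shows "\<exists>t. 0 \<le> t \<and> t < N \<and> (t + c) mod N - t = ((t + d) mod N + c) mod N - (t + d) mod N"
proof -
  have mod_sub: "x mod N = x - N" if "N \<le> x" "x < 2*N" for x :: int
    using that by (metis mod_add_self2 diff_add_cancel mod_pos_pos_trivial diff_ge_0_iff_ge
        diff_less_eq mult_2)
  consider "d < c" | "c \<le> d" "d < N - c" | "c < d" "N - c \<le> d" | "d = c" "N < 2*c"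
    using assms by linarith
  then show ?thesis
  proof cases
    case 1
    then have "(N - c + d) mod N = N - c + d" using assms by (intro mod_pos_pos_trivial) auto
    then show ?thesis using assms by (intro exI[of _ "N - c"]) simp
  next
    case 2
    then have "(d + c) mod N = d + c" using assms by (intro mod_pos_pos_trivial) auto
    then show ?thesis using assms by (intro exI[of _ 0]) simp
  next
    case 3
    then have "(N - d + c) mod N = N - d + c" using assms by (intro mod_pos_pos_trivial) auto
    then show ?thesis using assms 3 by (intro exI[of _ "N - d"]) simp
  next
    case 4
    then have "(N - 1 + c) mod N = c - 1" "(2*c - 1) mod N = 2*c - 1 - N"
      using assms mod_sub[of "N - 1 + c"] mod_sub[of "2*c - 1"] by simp_all
    then show ?thesis using assms 4 by (intro exI[of _ "N - 1"]) simp
  qed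
qed

lemma common_unwrapping_offset:
  fixes A B A' B' N :: int
  assumes "0 < N" "(B - A) mod N = (B' - A') mod N" "(B - A) mod N \<noteq> 0"
    "\<not> (A' mod N = B mod N \<and> B' mod N = A mod N)"
  shows "\<exists>k. window_lift N k B - window_lift N k A = window_lift N k B' - window_lift N k A'"
proof -
  define c where "c = (B - A) mod N"
  define d where "d = (A' - A) mod N"
  have "\<not> (d = c \<and> 2*c = N)"
  proof
    assume dc: "d = c \<and> 2*c = N"
    then have "A' mod N = B mod N" unfolding c_def d_def by (simp add: mod_eq_dvd_iff)
    moreover have "(B' - A) mod N = 0"
    proof -
      have "(B' - A') mod N = c" "(A' - A) mod N = c"
        using assms(2) dc unfolding c_def d_def by simp_all
      have "(B' - A) mod N = ((B' - A') + (A' - A)) mod N" by simp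
      also have "\<dots> = ((B' - A') mod N + (A' - A) mod N) mod N" by (rule mod_add_eq[symmetric])
      also have "\<dots> = 0" using \<open>(B' - A') mod N = c\<close> \<open>(A' - A) mod N = c\<close> dc
        by (simp add: mult_2[symmetric])
      finally show ?thesis .
    qed
    then have "B' mod N = A mod N" by (simp add: mod_eq_dvd_iff dvd_eq_mod_eq_0)
    ultimately show False using assms(4) by blast
  qed
  moreover have "0 \<le> c" "c \<noteq> 0" "c < N" "0 \<le> d" "d < N"
    using assms(1,3) unfolding c_def d_def by auto
  ultimately obtain t where t: "0 \<le> t" "t < N"
      "(t + c) mod N - t = ((t + d) mod N + c) mod N - (t + d) mod N"
    using common_unwrapping_offset_normalized[of c N d] by fastforce
  have "(B - (A - t)) mod N = (t + c) mod N" "(A' - (A - t)) mod N = (t + d) mod N"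
    unfolding c_def d_def by (simp_all add: mod_simps algebra_simps)
  moreover have "(B' - (A - t)) mod N = ((t + d) mod N + c) mod N"
  proof -
    have "(B' - (A - t)) mod N = ((B' - A') + (A' - (A - t))) mod N"
      by (simp add: algebra_simps)
    also have "\<dots> = ((B' - A') mod N + (A' - (A - t)) mod N) mod N" by (simp add: mod_add_eq)
    also have "\<dots> = ((t + d) mod N + c) mod N"
      using \<open>(A' - (A - t)) mod N = (t + d) mod N\<close> assms(2) unfolding c_def
      by (simp add: add.commute)
    finally show ?thesis .
  qed
  ultimately show ?thesis using t
    by (intro exI[of _ "A - t"]) (simp add: window_lift_def)
qed

lemma rep_eq_self: "i \<in> {1..int n} \<Longrightarrow> rep i n = i"
  unfolding rep_def by (simp add: mod_pos_pos_trivial)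

lemma rep_add_period: "rep (i + int n) n = rep i n"
proof -
  have "i + int n - 1 = (i - 1) + int n" by simp
  then show ?thesis unfolding rep_def by (simp only: mod_add_self2)
qed

lemma rep_window_lift:
  assumes "a \<in> {1..int n}"
  shows "rep (window_lift (int n) k a) n = a"
proof -
  have "(window_lift (int n) k a - 1) mod int n = ((a - k) mod int n + (k - 1)) mod int n"
    unfolding window_lift_def by (simp add: algebra_simps)
  also have "\<dots> = (a - 1) mod int n" by (simp add: mod_simps)
  finally have "(window_lift (int n) k a - 1) mod int n = (a - 1) mod int n" .
  then show ?thesis using assms rep_eq_self[OF assms] unfolding rep_def by simp
qed

lemma window_lift_bounds:
  "0 < N \<Longrightarrow> window_lift N k a \<in> {k..k + N - 1}"
  unfolding window_lift_def using pos_mod_bound[of N "a - k"] by auto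

lemma dot_in_window:
  assumes "i \<in> {1..n1}" "p1 \<in> {k1..k1 + int n1 - 1}" "rep p1 n1 = int i"
    and "j \<in> {1..n2}" "p2 \<in> {k2..k2 + int n2 - 1}" "rep p2 n2 = int j"
    and "\<phi> i j \<in> {1..n1*n2}"
  shows "(p1, p2, window_lift (int (n1*n2)) k3 (int (\<phi> i j))) \<in> window_dots \<phi> n1 n2 k1 k2 k3"
proof -
  have "int (\<phi> i j) \<in> {1..int (n1*n2)}"
    using assms(7) by (simp only: atLeastAtMost_iff of_nat_le_iff) simp
  then have "rep (window_lift (int (n1*n2)) k3 (int (\<phi> i j))) (n1*n2) = int (\<phi> i j)"
    by (rule rep_window_lift)
  moreover have "0 < int (n1*n2)"
    using assms(7) by (simp only: of_nat_0_less_iff atLeastAtMost_iff) linarith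
  then have "window_lift (int (n1*n2)) k3 (int (\<phi> i j)) \<in> {k3..k3 + int (n1*n2) - 1}"
    by (rule window_lift_bounds)
  ultimately show ?thesis using assms
    unfolding window_dots_def periodic_ext_def perm_array_def by auto
qed

definition cyc_succ :: "nat \<Rightarrow> nat \<Rightarrow> nat" where
  "cyc_succ n i = (if i = n then 1 else i + 1)"

lemma cyc_succ_in_range: "i \<in> {1..n} \<Longrightarrow> cyc_succ n i \<in> {1..n}"
  unfolding cyc_succ_def by auto

lemma cyc_succ_neq: "2 \<le> n \<Longrightarrow> i \<in> {1..n} \<Longrightarrow> cyc_succ n i \<noteq> i"
  unfolding cyc_succ_def by auto

lemma cyc_succ_succ_neq: "3 \<le> n \<Longrightarrow> i \<in> {1..n} \<Longrightarrow> cyc_succ n (cyc_succ n i) \<noteq> i"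
  unfolding cyc_succ_def by auto

text \<open>Cutting the cycle \<open>[n]\<close> just after \<open>c\<close>, only the step leaving \<open>c\<close> wraps
  around.\<close>
lemma cyc_step_in_window:
  assumes "i \<in> {1..n}" "c \<in> {1..n}" "i \<noteq> c"
  shows "\<exists>p. int c + 1 \<le> p \<and> p + 1 \<le> int c + int n \<and> rep p n = int i
           \<and> rep (p + 1) n = int (cyc_succ n i)"
proof (cases "c < i")
  case True
  have "rep (int i + 1) n = int (cyc_succ n i)"
    using assms rep_add_period[of 1 n] by (auto simp: cyc_succ_def rep_eq_self add.commute)
  then show ?thesis using True assms by (intro exI[of _ "int i"]) (auto simp: rep_eq_self)
next
  case False
  then have "i < c" using assms(3) by simp
  have "rep (int i + int n + 1) n = rep (int i + 1 + int n) n" by (simp add: algebra_simps)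
  then have "rep (int i + int n + 1) n = int (cyc_succ n i)"
    using assms \<open>i < c\<close> by (simp add: rep_add_period rep_eq_self cyc_succ_def)
  then show ?thesis using \<open>i < c\<close> assms
    by (intro exI[of _ "int i + int n"]) (auto simp: rep_add_period rep_eq_self)
qed

lemma cyc_step_dots_in_window:
  fixes n1 n2 :: nat and k :: int and \<phi> :: "nat \<Rightarrow> nat \<Rightarrow> nat"
  defines "L \<equiv> window_lift (int (n1*n2)) k"
  assumes "i \<in> {1..n1}" "c \<in> {1..n1}" "i \<noteq> c" "j \<in> {1..n2}"
    and "\<phi> i j \<in> {1..n1*n2}" "\<phi> (cyc_succ n1 i) j \<in> {1..n1*n2}"
  shows "\<exists>p. rep p n1 = int i
    \<and> (p, int j, L (int (\<phi> i j))) \<in> window_dots \<phi> n1 n2 (int c + 1) 1 k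
    \<and> (p + 1, int j, L (int (\<phi> (cyc_succ n1 i) j))) \<in> window_dots \<phi> n1 n2 (int c + 1) 1 k"
proof -
  obtain p where p: "int c + 1 \<le> p" "p + 1 \<le> int c + int n1" "rep p n1 = int i"
      "rep (p + 1) n1 = int (cyc_succ n1 i)"
    using cyc_step_in_window assms(2-4) by blast
  have j: "int j \<in> {1..1 + int n2 - 1}" "rep (int j) n2 = int j"
    using assms(5) by (auto simp: rep_eq_self)
  show ?thesis unfolding L_def using p j assms(2,5-7) cyc_succ_in_range[OF assms(2)]
    by (intro exI[of _ p] conjI dot_in_window) auto
qed

lemma equal_unwrapped_cyc_step_gaps:
  fixes n1 n2 :: nat and \<phi> :: "nat \<Rightarrow> nat \<Rightarrow> nat"
  defines "L \<equiv> \<lambda>k a. window_lift (int (n1*n2)) k (int a)"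
  assumes "n1 \<ge> 3" "n2 \<ge> 1"
    and bij: "bij_betw (\<lambda>(a1, a2). \<phi> a1 a2) ({1..n1} \<times> {1..n2}) {1..n1*n2}"
  shows "\<exists>i j i' j' k. (i, j) \<in> {1..n1} \<times> {1..n2} \<and> (i', j') \<in> {1..n1} \<times> {1..n2}
    \<and> (i, j) \<noteq> (i', j')
    \<and> L k (\<phi> (cyc_succ n1 i) j) - L k (\<phi> i j) = L k (\<phi> (cyc_succ n1 i') j') - L k (\<phi> i' j')"
proof -
  define N where "N = n1*n2"
  define P where "P = {1..n1} \<times> {1..n2}"
  define f where "f = (\<lambda>(i, j). int (\<phi> i j))"
  define \<sigma> where "\<sigma> = (\<lambda>(i, j :: nat). (cyc_succ n1 i, j))"
  have "\<phi> i j \<in> {1..N}" if "(i, j) \<in> P" for i j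
    using bij_betw_apply[OF bij] that unfolding N_def P_def by fastforce
  then have f_range: "f x \<in> {1..int N}" if "x \<in> P" for x
    using that unfolding f_def by (auto split: prod.splits)
  have inj: "inj_on f P"
  proof -
    have "inj_on (int \<circ> (\<lambda>(i, j). \<phi> i j)) P"
      using bij unfolding bij_betw_def P_def
      by (intro comp_inj_on) (auto intro: inj_on_subset[OF inj_of_nat])
    then show ?thesis unfolding f_def by (simp add: comp_def case_prod_beta')
  qed
  have \<sigma>P: "\<sigma> x \<in> P" if "x \<in> P" for x
    using that cyc_succ_in_range unfolding \<sigma>_def P_def by auto
  have no_fixpoint: "\<sigma> x \<noteq> x" if "x \<in> P" for x
    using that assms(2) cyc_succ_neq[of n1] unfolding \<sigma>_def P_def by auto
  have "finite P" "card P = N" "0 < N"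
    using assms(2,3) unfolding P_def N_def by (simp_all add: card_cartesian_product)
  moreover have "f ` P \<subseteq> {1..int N}" "\<sigma> ` P \<subseteq> P" using f_range \<sigma>P by blast+
  ultimately obtain x y where xy: "x \<in> P" "y \<in> P" "x \<noteq> y"
      "(f (\<sigma> x) - f x) mod int N \<noteq> 0"
      "(f (\<sigma> x) - f x) mod int N = (f (\<sigma> y) - f y) mod int N"
    using cyclic_gap_collision[of P N f \<sigma>] inj no_fixpoint by blast
  have "\<not> (f y mod int N = f (\<sigma> x) mod int N \<and> f (\<sigma> y) mod int N = f x mod int N)"
  proof
    assume "f y mod int N = f (\<sigma> x) mod int N \<and> f (\<sigma> y) mod int N = f x mod int N"
    then have "f y = f (\<sigma> x)" "f (\<sigma> y) = f x"
      using eq_if_mod_eq_in_interval f_range xy(1,2) \<sigma>P by blast+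
    then have "\<sigma> (\<sigma> x) = x" using inj_onD[OF inj] xy(1,2) \<sigma>P by metis
    then show False
      using xy(1) assms(2) cyc_succ_succ_neq[of n1] unfolding \<sigma>_def P_def by auto
  qed
  then obtain k where "window_lift (int N) k (f (\<sigma> x)) - window_lift (int N) k (f x)
      = window_lift (int N) k (f (\<sigma> y)) - window_lift (int N) k (f y)"
    using common_unwrapping_offset[OF _ xy(5,4)] \<open>0 < N\<close> by auto
  then show ?thesis using xy(1-3) unfolding L_def N_def P_def f_def \<sigma>_def by fastforce
qed

lemma has_repeated_diff_window_if_first_side_ge_3:
  fixes n1 n2 :: nat and \<phi> :: "nat \<Rightarrow> nat \<Rightarrow> nat"
  assumes "n1 \<ge> 3" "n2 \<ge> 1"
    and bij: "bij_betw (\<lambda>(a1, a2). \<phi> a1 a2) ({1..n1} \<times> {1..n2}) {1..n1*n2}"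
  shows "\<exists>k1 k2 k3. has_repeated_diff (window_dots \<phi> n1 n2 k1 k2 k3)"
proof -
  let ?L = "\<lambda>k a. window_lift (int (n1*n2)) k (int a)"
  obtain i j i' j' k where ij: "(i, j) \<in> {1..n1} \<times> {1..n2}" "(i', j') \<in> {1..n1} \<times> {1..n2}"
      "(i, j) \<noteq> (i', j')"
      and k: "?L k (\<phi> (cyc_succ n1 i) j) - ?L k (\<phi> i j)
        = ?L k (\<phi> (cyc_succ n1 i') j') - ?L k (\<phi> i' j')"
    using equal_unwrapped_cyc_step_gaps[OF assms] by blast
  have range: "\<phi> a b \<in> {1..n1*n2}" if "a \<in> {1..n1}" "b \<in> {1..n2}" for a b
    using bij_betw_apply[OF bij] that by fastforce
  obtain c where c: "c \<in> {1..n1}" "c \<noteq> i" "c \<noteq> i'"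
  proof
    show "(if i \<noteq> 1 \<and> i' \<noteq> 1 then 1 else if i \<noteq> 2 \<and> i' \<noteq> 2 then 2 else 3) \<in> {1..n1}"
      using assms(1) by auto
  qed auto
  let ?W = "window_dots \<phi> n1 n2 (int c + 1) 1 k"
  obtain p where p: "rep p n1 = int i" "(p, int j, ?L k (\<phi> i j)) \<in> ?W"
      "(p + 1, int j, ?L k (\<phi> (cyc_succ n1 i) j)) \<in> ?W"
    using cyc_step_dots_in_window[of i n1 c j n2 \<phi> k] c ij(1) range cyc_succ_in_range by auto
  obtain p' where p': "rep p' n1 = int i'" "(p', int j', ?L k (\<phi> i' j')) \<in> ?W"
      "(p' + 1, int j', ?L k (\<phi> (cyc_succ n1 i') j')) \<in> ?W"
    using cyc_step_dots_in_window[of i' n1 c j' n2 \<phi> k] c ij(2) range cyc_succ_in_range by auto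
  have "has_repeated_diff ?W"
    by (rule has_repeated_diffI[OF p(2,3) p'(2,3)])
      (use p(1) p'(1) ij(3) k in \<open>auto simp: diff_vec_def\<close>)
  then show ?thesis by blast
qed

definition transpose_point :: "point3 \<Rightarrow> point3" where
  "transpose_point = (\<lambda>(a1, a2, a3). (a2, a1, a3))"

lemma transpose_point_in_window_dots:
  "p \<in> window_dots \<phi> n1 n2 k1 k2 k3
     \<Longrightarrow> transpose_point p \<in> window_dots (\<lambda>a1 a2. \<phi> a2 a1) n2 n1 k2 k1 k3"
  unfolding window_dots_def periodic_ext_def perm_array_def transpose_point_def
  by (auto simp: mult.commute)

lemma has_repeated_diff_transpose:
  assumes "has_repeated_diff D" "\<And>p. p \<in> D \<Longrightarrow> transpose_point p \<in> D'"
  shows "has_repeated_diff D'"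
proof -
  obtain a w b v where "a \<in> D" "w \<in> D" "b \<in> D" "v \<in> D" "a \<noteq> w" "(a, w) \<noteq> (b, v)"
      "diff_vec a w = diff_vec b v"
    using assms(1) unfolding has_repeated_diff_def by blast
  moreover have "inj transpose_point" unfolding transpose_point_def inj_def by auto
  moreover have "diff_vec (transpose_point a) (transpose_point w)
      = transpose_point (diff_vec a w)" for a w
    unfolding transpose_point_def diff_vec_def by (auto split: prod.splits)
  ultimately show ?thesis
    by (intro has_repeated_diffI[of "transpose_point a" D' "transpose_point w"
          "transpose_point b" "transpose_point v"] assms(2)) (auto dest: injD)
qed

lemma bij_betw_transpose:
  assumes "bij_betw (\<lambda>(a1, a2). \<phi> a1 a2) (A \<times> B) C"
  shows "bij_betw (\<lambda>(a2, a1). \<phi> a1 a2) (B \<times> A) C"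
proof -
  have "bij_betw prod.swap (B \<times> A) (A \<times> B)"
    unfolding bij_betw_def using bij_swap bij_is_inj product_swap by (metis inj_on_subset top_greatest)
  from bij_betw_trans[OF this assms] show ?thesis by (simp add: comp_def case_prod_beta')
qed

theorem mainTheorem11:
  fixes n1 n2 :: nat and \<phi> :: "nat \<Rightarrow> nat \<Rightarrow> nat"
  assumes "n1 \<ge> 2" and "n2 \<ge> 2"
    and "bij_betw (\<lambda>(a1, a2). \<phi> a1 a2) ({1..n1} \<times> {1..n2}) {1..n1*n2}"
    and "(odd n1 \<and> odd n2)
         \<or> (even n1 \<and> even n2 \<and> max n1 n2 > 4)
         \<or> (even n1 \<and> n1 > 2 \<and> odd n2)
         \<or> (even n2 \<and> n2 > 2 \<and> odd n1)"
  shows "\<exists>k1 k2 k3. has_repeated_diff (window_dots \<phi> n1 n2 k1 k2 k3)"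
proof -
  have "n1 \<ge> 3 \<or> n2 \<ge> 3" using assms(1,2,4) by (cases "n1 = 2 \<and> n2 = 2") auto
  then show ?thesis
  proof
    assume "n1 \<ge> 3"
    then show ?thesis using has_repeated_diff_window_if_first_side_ge_3 assms(2,3) by simp
  next
    assume "n2 \<ge> 3"
    have "bij_betw (\<lambda>(a2, a1). \<phi> a1 a2) ({1..n2} \<times> {1..n1}) {1..n2*n1}"
      using bij_betw_transpose[OF assms(3)] by (simp add: mult.commute)
    then obtain k2 k1 k3 where "has_repeated_diff (window_dots (\<lambda>a2 a1. \<phi> a1 a2) n2 n1 k2 k1 k3)"
      using has_repeated_diff_window_if_first_side_ge_3[of n2 n1 "\<lambda>a2 a1. \<phi> a1 a2"]
        \<open>n2 \<ge> 3\<close> assms(1) by auto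
    then have "has_repeated_diff (window_dots \<phi> n1 n2 k1 k2 k3)"
      by (rule has_repeated_diff_transpose) (use transpose_point_in_window_dots in fastforce)
    then show ?thesis by blast
  qed
qed

end
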